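(* Let $\mathcal K$ be a tame topological Kuranishi atlas and let $(I,x),(J,y)$ with $x\in U_I$, $y\in U_J$. The following are equivalent: (1) $(I,x)\sim(J,y)$ in the equivalence relation defining $|\mathcal K|$; (2) $I\cup J\in\mathcal I_{\mathcal K}$, $x\in U_{I(I\cup J)}$, $y\in U_{J(I\cup J)}$ and $\phi_{I(I\cup J)}(x)=\phi_{J(I\cup J)}(y)$; (3) either $I\cap J\neq\emptyset$ and there is $w\in U_{(I\cap J)I}\cap U_{(I\cap J)J}$ with $\phi_{(I\cap J)I}(w)=x$ and $\phi_{(I\cap J)J}(w)=y$, or $I\cap J=\emptyset$, $\mathfrak s_I(x)=0_I(x)$, $\mathfrak s_J(y)=0_J(y)$ and $\psi_I(x)=\psi_J(y)$. The analogous equivalences hold for $(I,e),(J,f)$ with $e\in\mathbb E_I$, $f\in\mathbb E_J$ and the relation defining $|\mathbf E_{\mathcal K}|$, with $\phi$ replaced by $\widehat\Phi$ and domains $U_{\bullet\bullet}$ replaced by $\mathrm{pr}_\bullet^{-1}(U_{\bullet\bullet})$, where in the case $I\cap J=\emptyset$ the condition is that $e=\mathfrak s_I(x)=0_I(x)$ and $f=\mathfrak s_J(y)=0_J(y)$ for some $x\in U_I$, $y\in U_J$ with $\psi_I(x)=\psi_J(y)$. Moreover, for each $I\in\mathcal I_{\mathcal K}$ the maps $\pi_{\mathcal K}|_{U_I}:U_I\to|\mathcal K|$ and $\pi_{\mathbf E_{\mathcal K}}|_{\mathbb E_I}:\mathbb E_I\to|\mathbf E_{\mathcal K}|$ are 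injective.
   Context: $X$ is a compact metrizable space. Charts: a topological Kuranishi chart for $X$ with open footprint $F\subset X$ is a tuple $\mathbf K=(U,\mathbb E,\mathfrak s,\psi)$ where $U$ is a separable, locally compact, metrizable space; $\mathbb E$ is a separable, locally compact, metrizable space with continuous maps $\mathrm{pr}:\mathbb E\to U$ and $0:U\to\mathbb E$ with $\mathrm{pr}\circ0=\mathrm{id}_U$; $\mathfrak s:U\to\mathbb E$ is continuous with $\mathrm{pr}\circ\mathfrak s=\mathrm{id}_U$; and $\psi$ is a homeomorphism from $\mathfrak s^{-1}(0):=\{x\in U:\mathfrak s(x)=0(x)\}$ onto $F$. Coordinate changes: for charts $\mathbf K_I,\mathbf K_J$ with $F_I\cap F_J\neq\emptyset$, a coordinate change $\widehat\Phi_{IJ}:\mathbf K_I\to\mathbf K_J$ consists of an open set $U_{IJ}\subset U_I$ with $U_{IJ}\cap\mathfrak s_I^{-1}(0_I)=\psi_I^{-1}(F_I\cap F_J)$ and a topological embedding $\widehat\Phi_{IJ}:\mathrm{pr}_I^{-1}(U_{IJ})\to\mathbb E_J$ such that there is a topological embedding $\phi_{IJ}:U_{IJ}\to U_J$ with $\mathrm{pr}_J\circ\widehat\Phi_{IJ}=\phi_{IJ}\circ\mathrm{pr}_I$, $0_J\circ\phi_{IJ}=\widehat\Phi_{IJ}\circ0_I$ and $\mathfrak s_J\circ\phi_{IJ}=\widehat\Phi_{IJ}\circ\mathfrak s_I$ on $U_{IJ}$, and $\phi_{IJ}=\psi_J^{-1}\circ\psi_I$ on $U_{IJ}\cap\mathfrak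 s_I^{-1}(0_I)$. Atlases: a covering family of basic charts is a finite family $(\mathbf K_i)_{i=1,\dots,N}$ of charts whose footprints cover $X$; $\mathcal I_{\mathcal K}$ is the set of nonempty $I\subset\{1,\dots,N\}$ with $F_I:=\bigcap_{i\in I}F_i\neq\emptyset$. Transition data consist of a chart $\mathbf K_J$ with footprint $F_J$ for each $J\in\mathcal I_{\mathcal K}$ with $|J|\ge2$ (and $\mathbf K_{\{i\}}:=\mathbf K_i$), and a coordinate change $\widehat\Phi_{IJ}:\mathbf K_I\to\mathbf K_J$ for all $I\subsetneq J$ in $\mathcal I_{\mathcal K}$. We set $U_{II}:=U_I$, $\phi_{II}:=\mathrm{id}_{U_I}$, $\widehat\Phi_{II}:=\mathrm{id}_{\mathbb E_I}$. For $I\subsetneq J\subsetneq K$ let $U_{IJK}:=U_{IJ}\cap\phi_{IJ}^{-1}(U_{JK})$. The triple satisfies the weak cocycle condition if $\widehat\Phi_{JK}\circ\widehat\Phi_{IJ}=\widehat\Phi_{IK}$ on $\mathrm{pr}_I^{-1}(U_{IJK}\cap U_{IK})$; the cocycle condition if in addition $U_{IJK}\subset U_{IK}$; the strong cocycle condition if in addition $U_{IJK}=U_{IK}$. A weak topological Kuranishi atlas $\mathcal K$ is a covering family with transition data satisfying the weak cocycle condition for all such triples; a topological Kuranishi atlas is one satisfying the cocycle condition for all triples. Filtrations: a weak topological Kuranishi atlas is filtered if it is equipped with closed subsets $\mathbb E_{IJ}\subset\mathbb E_J$ for all $J\in\mathcal I_{\mathcal K}$ and $I\subset J$ (including $I=\emptyset$)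 such that (i) $\mathbb E_{JJ}=\mathbb E_J$ and $\mathbb E_{\emptyset J}=\mathrm{im}\,0_J$; (ii) $\widehat\Phi_{JK}(\mathrm{pr}_J^{-1}(U_{JK})\cap\mathbb E_{IJ})=\mathbb E_{IK}\cap\mathrm{pr}_K^{-1}(\mathrm{im}\,\phi_{JK})$ for $I\subset J\subsetneq K$; (iii) $\mathbb E_{IJ}\cap\mathbb E_{HJ}=\mathbb E_{(I\cap H)J}$ for $I,H\subset J$; (iv) $\mathrm{im}\,\phi_{IJ}$ is an open subset of $\mathfrak s_J^{-1}(\mathbb E_{IJ})$ for $I\subsetneq J$. Tameness: a filtered weak topological Kuranishi atlas is tame if $U_{IJ}\cap U_{IK}=U_{I(J\cup K)}$ for all $I,J,K\in\mathcal I_{\mathcal K}$ with $I\subset J,K$ (where $U_{IL}:=\emptyset$ if $L\notin\mathcal I_{\mathcal K}$), and $\phi_{IJ}(U_{IK})=U_{JK}\cap\mathfrak s_J^{-1}(\mathbb E_{IJ})$ for all $I\subset J\subset K$ in $\mathcal I_{\mathcal K}$ (equalities of indices allowed). Virtual neighbourhood: for a topological Kuranishi atlas, $|\mathcal K|$ is the quotient of $\bigsqcup_{I\in\mathcal I_{\mathcal K}}U_I=\{(I,x):x\in U_I\}$ by the equivalence relation generated by $(I,x)\sim(J,\phi_{IJ}(x))$ for $I\subset J$, $x\in U_{IJ}$, with the quotient topology and projection $\pi_{\mathcal K}$; similarly $|\mathbf E_{\mathcal K}|$ is the quotient of $\bigsqcup_I\mathbb E_I$ by the relation generated by $(I,e)\sim(J,\widehat\Phi_{IJ}(e))$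 for $e\in\mathrm{pr}_I^{-1}(U_{IJ})$, with projection $\pi_{\mathbf E_{\mathcal K}}$. *)

theory Defs
  imports "HOL-Analysis.Analysis"
begin

text \<open>All domains U_I live in one ambient type 'u and
all bundles E_I in one ambient type 'e; each chart carries its own topology, whose
carrier (topspace) is the actual space.\<close>

record ('x, 'u, 'e) katlas =
  nch  :: nat
  Fb   :: "nat \<Rightarrow> 'x set"
  Ut   :: "nat set \<Rightarrow> 'u topology"
  Et   :: "nat set \<Rightarrow> 'e topology"
  pr   :: "nat set \<Rightarrow> 'e \<Rightarrow> 'u"
  zr   :: "nat set \<Rightarrow> 'u \<Rightarrow> 'e"
  sc   :: "nat set \<Rightarrow> 'u \<Rightarrow> 'e"
  psi  :: "nat set \<Rightarrow> 'u \<Rightarrow> 'x"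
  UU   :: "nat set \<Rightarrow> nat set \<Rightarrow> 'u set"    \<comment> \<open>U_IJ for I strictly contained in J\<close>
  phi  :: "nat set \<Rightarrow> nat set \<Rightarrow> 'u \<Rightarrow> 'u"
  Phi  :: "nat set \<Rightarrow> nat set \<Rightarrow> 'e \<Rightarrow> 'e"
  EE   :: "nat set \<Rightarrow> nat set \<Rightarrow> 'e set"    \<comment> \<open>filtration E_IJ, a subset of E_J\<close>

definition zeroset :: "'u topology \<Rightarrow> ('u \<Rightarrow> 'e) \<Rightarrow> ('u \<Rightarrow> 'e) \<Rightarrow> 'u set" where
  "zeroset U z s = {x \<in> topspace U. s x = z x}"

definition is_kchart ::
  "'x topology \<Rightarrow> 'u topology \<Rightarrow> 'e topology \<Rightarrow> ('e \<Rightarrow> 'u) \<Rightarrow> ('u \<Rightarrow> 'e) \<Rightarrow> ('u \<Rightarrow> 'e)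
    \<Rightarrow> ('u \<Rightarrow> 'x) \<Rightarrow> 'x set \<Rightarrow> bool" where
  "is_kchart X U E p z s ps F \<longleftrightarrow>
     openin X F \<and>
     separable_space U \<and> locally_compact_space U \<and> metrizable_space U \<and>
     separable_space E \<and> locally_compact_space E \<and> metrizable_space E \<and>
     continuous_map E U p \<and> continuous_map U E z \<and> (\<forall>x\<in>topspace U. p (z x) = x) \<and>
     continuous_map U E s \<and> (\<forall>x\<in>topspace U. p (s x) = x) \<and>
     homeomorphic_map (subtopology U (zeroset U z s)) (subtopology X F) ps"

definition footprint :: "('x, 'u, 'e, 'z) katlas_scheme \<Rightarrow> nat set \<Rightarrow> 'x set" where
  "footprint K I = (\<Inter>i\<in>I. Fb K i)"

definition IK :: "('x, 'u, 'e, 'z) katlas_scheme \<Rightarrow> nat set set" where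
  "IK K = {I. I \<noteq> {} \<and> I \<subseteq> {1..nch K} \<and> footprint K I \<noteq> {}}"

definition prpre :: "('x, 'u, 'e, 'z) katlas_scheme \<Rightarrow> nat set \<Rightarrow> 'u set \<Rightarrow> 'e set" where
  "prpre K I A = {e \<in> topspace (Et K I). pr K I e \<in> A}"

definition chart_zeros :: "('x, 'u, 'e, 'z) katlas_scheme \<Rightarrow> nat set \<Rightarrow> 'u set" where
  "chart_zeros K I = zeroset (Ut K I) (zr K I) (sc K I)"

text \<open>Conventions: U_II = U_I, phi_II = id, Phi_II = id, and U_IL = {} if L is not in IK.\<close>
definition Uij :: "('x, 'u, 'e, 'z) katlas_scheme \<Rightarrow> nat set \<Rightarrow> nat set \<Rightarrow> 'u set" where
  "Uij K I J = (if J \<notin> IK K then {} else if I = J then topspace (Ut K I) else UU K I J)"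

definition phij :: "('x, 'u, 'e, 'z) katlas_scheme \<Rightarrow> nat set \<Rightarrow> nat set \<Rightarrow> 'u \<Rightarrow> 'u" where
  "phij K I J = (if I = J then id else phi K I J)"

definition Phij :: "('x, 'u, 'e, 'z) katlas_scheme \<Rightarrow> nat set \<Rightarrow> nat set \<Rightarrow> 'e \<Rightarrow> 'e" where
  "Phij K I J = (if I = J then id else Phi K I J)"

definition is_coord_change :: "'x topology \<Rightarrow> ('x, 'u, 'e, 'z) katlas_scheme \<Rightarrow> nat set \<Rightarrow> nat set \<Rightarrow> bool" where
  "is_coord_change X K I J \<longleftrightarrow>
     openin (Ut K I) (UU K I J) \<and>
     UU K I J \<inter> chart_zeros K I = {x \<in> chart_zeros K I. psi K I x \<in> footprint K I \<inter> footprint K J} \<and>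
     embedding_map (subtopology (Et K I) (prpre K I (UU K I J))) (Et K J) (Phi K I J) \<and>
     embedding_map (subtopology (Ut K I) (UU K I J)) (Ut K J) (phi K I J) \<and>
     (\<forall>e\<in>prpre K I (UU K I J). pr K J (Phi K I J e) = phi K I J (pr K I e)) \<and>
     (\<forall>x\<in>UU K I J. zr K J (phi K I J x) = Phi K I J (zr K I x)) \<and>
     (\<forall>x\<in>UU K I J. sc K J (phi K I J x) = Phi K I J (sc K I x)) \<and>
     (\<forall>x\<in>UU K I J \<inter> chart_zeros K I.
        phi K I J x = inv_into (chart_zeros K J) (psi K J) (psi K I x))"

definition is_top_katlas :: "'x topology \<Rightarrow> ('x, 'u, 'e, 'z) katlas_scheme \<Rightarrow> bool" where
  "is_top_katlas X K \<longleftrightarrow>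
     (\<forall>i\<in>{1..nch K}. is_kchart X (Ut K {i}) (Et K {i}) (pr K {i}) (zr K {i}) (sc K {i})
                         (psi K {i}) (Fb K i)) \<and>
     (\<Union>i\<in>{1..nch K}. Fb K i) = topspace X \<and>
     (\<forall>J\<in>IK K. is_kchart X (Ut K J) (Et K J) (pr K J) (zr K J) (sc K J) (psi K J) (footprint K J)) \<and>
     (\<forall>I\<in>IK K. \<forall>J\<in>IK K. I \<subset> J \<longrightarrow> is_coord_change X K I J) \<and>
     (\<forall>I\<in>IK K. \<forall>J\<in>IK K. \<forall>L\<in>IK K. I \<subset> J \<and> J \<subset> L \<longrightarrow>
        (\<forall>e\<in>prpre K I ((UU K I J \<inter> phi K I J -` UU K J L) \<inter> UU K I L).
            Phi K J L (Phi K I J e) = Phi K I L e) \<and>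
        UU K I J \<inter> phi K I J -` UU K J L \<subseteq> UU K I L)"

definition is_filtered :: "('x, 'u, 'e, 'z) katlas_scheme \<Rightarrow> bool" where
  "is_filtered K \<longleftrightarrow>
     (\<forall>J\<in>IK K. \<forall>I. I \<subseteq> J \<longrightarrow> closedin (Et K J) (EE K I J)) \<and>
     (\<forall>J\<in>IK K. EE K J J = topspace (Et K J) \<and> EE K {} J = zr K J ` topspace (Ut K J)) \<and>
     (\<forall>J\<in>IK K. \<forall>L\<in>IK K. \<forall>I. I \<subseteq> J \<and> J \<subset> L \<longrightarrow>
        Phi K J L ` (prpre K J (UU K J L) \<inter> EE K I J)
          = EE K I L \<inter> prpre K L (phi K J L ` UU K J L)) \<and>
     (\<forall>J\<in>IK K. \<forall>I H. I \<subseteq> J \<and> H \<subseteq> J \<longrightarrow> EE K I J \<inter> EE K H J = EE K (I \<inter> H) J) \<and>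
     (\<forall>I\<in>IK K. \<forall>J\<in>IK K. I \<subset> J \<longrightarrow>
        openin (subtopology (Ut K J) {x \<in> topspace (Ut K J). sc K J x \<in> EE K I J})
               (phi K I J ` UU K I J))"

definition is_tame :: "('x, 'u, 'e, 'z) katlas_scheme \<Rightarrow> bool" where
  "is_tame K \<longleftrightarrow>
     (\<forall>I\<in>IK K. \<forall>J\<in>IK K. \<forall>L\<in>IK K. I \<subseteq> J \<and> I \<subseteq> L \<longrightarrow>
        Uij K I J \<inter> Uij K I L = Uij K I (J \<union> L)) \<and>
     (\<forall>I\<in>IK K. \<forall>J\<in>IK K. \<forall>L\<in>IK K. I \<subseteq> J \<and> J \<subseteq> L \<longrightarrow>
        phij K I J ` Uij K I L = Uij K J L \<inter> {x \<in> topspace (Ut K J). sc K J x \<in> EE K I J})"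

definition domU :: "('x, 'u, 'e, 'z) katlas_scheme \<Rightarrow> (nat set \<times> 'u) set" where
  "domU K = {(I, x). I \<in> IK K \<and> x \<in> topspace (Ut K I)}"

definition domE :: "('x, 'u, 'e, 'z) katlas_scheme \<Rightarrow> (nat set \<times> 'e) set" where
  "domE K = {(I, e). I \<in> IK K \<and> e \<in> topspace (Et K I)}"

definition baseU :: "('x, 'u, 'e, 'z) katlas_scheme \<Rightarrow> nat set \<times> 'u \<Rightarrow> nat set \<times> 'u \<Rightarrow> bool" where
  "baseU K a b \<longleftrightarrow> (\<exists>I J x. I \<in> IK K \<and> J \<in> IK K \<and> I \<subseteq> J \<and> x \<in> Uij K I J \<and>
                      a = (I, x) \<and> b = (J, phij K I J x))"

definition baseE :: "('x, 'u, 'e, 'z) katlas_scheme \<Rightarrow> nat set \<times> 'e \<Rightarrow> nat set \<times> 'e \<Rightarrow> bool" where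
  "baseE K a b \<longleftrightarrow> (\<exists>I J e. I \<in> IK K \<and> J \<in> IK K \<and> I \<subseteq> J \<and> e \<in> prpre K I (Uij K I J) \<and>
                      a = (I, e) \<and> b = (J, Phij K I J e))"

definition relU :: "('x, 'u, 'e, 'z) katlas_scheme \<Rightarrow> ((nat set \<times> 'u) \<times> (nat set \<times> 'u)) set" where
  "relU K = {(a, b). a \<in> domU K \<and> b \<in> domU K \<and> equivclp (baseU K) a b}"

definition relE :: "('x, 'u, 'e, 'z) katlas_scheme \<Rightarrow> ((nat set \<times> 'e) \<times> (nat set \<times> 'e)) set" where
  "relE K = {(a, b). a \<in> domE K \<and> b \<in> domE K \<and> equivclp (baseE K) a b}"

definition piK :: "('x, 'u, 'e, 'z) katlas_scheme \<Rightarrow> nat set \<times> 'u \<Rightarrow> (nat set \<times> 'u) set" where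
  "piK K a = relU K `` {a}"

definition piE :: "('x, 'u, 'e, 'z) katlas_scheme \<Rightarrow> nat set \<times> 'e \<Rightarrow> (nat set \<times> 'e) set" where
  "piE K a = relE K `` {a}"

end

theory Submission
  imports Defs
begin

text \<open>The base spaces U_I and the bundles E_I, together with their transition maps, each form a
  tame gluing system: injective transition maps obeying the cocycle condition, whose domains satisfy
  U_IJ \<inter> U_IL = U_I(J \<union> L) and whose images from I and J inside a common A meet only in the image
  from I \<inter> J. In such a system "x and y agree in U_(I \<union> J)" is already transitive: push both
  identifications to I \<union> J \<union> L, then pull back to I \<union> L by injectivity. Hence it is the generated
  equivalence relation, and a common value in U_(I \<union> J) comes from a point of U_(I \<inter> J).
  For the atlas, the image condition is supplied by the filtration: the image of phi_IA is
  s_A^{-1}(E_IA), and E_IA \<inter> E_JA = E_(I \<inter> J)A. For disjoint I, J this is the zero section, which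
  forces both points to be zeros, and zeros are identified exactly through the footprint maps.\<close>

lemma embedding_map_imp_inj_on: "embedding_map X Y f \<Longrightarrow> inj_on f (topspace X)"
  unfolding embedding_map_def using homeomorphic_imp_injective_map by blast

lemma embedding_map_image_subset_topspace: "embedding_map X Y f \<Longrightarrow> f ` topspace X \<subseteq> topspace Y"
  unfolding embedding_map_def by (metis homeomorphic_imp_surjective_map topspace_subtopology Int_lower1)

section \<open>Tame gluing systems\<close>

locale tame_gluing =
  fixes idx :: "'i set set" and space :: "'i set \<Rightarrow> 'a set"
    and dom :: "'i set \<Rightarrow> 'i set \<Rightarrow> 'a set" and tr :: "'i set \<Rightarrow> 'i set \<Rightarrow> 'a \<Rightarrow> 'a"
  assumes idx_subset: "J \<in> idx \<Longrightarrow> I \<subseteq> J \<Longrightarrow> I \<noteq> {} \<Longrightarrow> I \<in> idx"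
    and idx_ne: "I \<in> idx \<Longrightarrow> I \<noteq> {}"
    and dom_idx: "x \<in> dom I J \<Longrightarrow> J \<in> idx"
    and dom_refl: "J \<in> idx \<Longrightarrow> dom J J = space J"
    and tr_refl: "tr J J x = x"
    and tr_space: "I \<in> idx \<Longrightarrow> I \<subseteq> J \<Longrightarrow> x \<in> dom I J \<Longrightarrow> tr I J x \<in> space J"
    and inj_on_tr: "I \<in> idx \<Longrightarrow> J \<in> idx \<Longrightarrow> I \<subseteq> J \<Longrightarrow> inj_on (tr I J) (dom I J)"
    and tr_cocycle: "I \<in> idx \<Longrightarrow> J \<in> idx \<Longrightarrow> I \<subseteq> J \<Longrightarrow> J \<subseteq> L \<Longrightarrow>
      x \<in> dom I J \<Longrightarrow> tr I J x \<in> dom J L \<Longrightarrow> x \<in> dom I L \<and> tr J L (tr I J x) = tr I L x"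
    and dom_Int: "I \<in> idx \<Longrightarrow> J \<in> idx \<Longrightarrow> L \<in> idx \<Longrightarrow> I \<subseteq> J \<Longrightarrow> I \<subseteq> L \<Longrightarrow>
      dom I J \<inter> dom I L = dom I (J \<union> L)"
    and tr_dom: "I \<in> idx \<Longrightarrow> J \<in> idx \<Longrightarrow> I \<subseteq> J \<Longrightarrow> J \<subseteq> L \<Longrightarrow>
      x \<in> dom I L \<Longrightarrow> tr I J x \<in> dom J L"
    and tr_image_Int: "I \<in> idx \<Longrightarrow> J \<in> idx \<Longrightarrow> A \<in> idx \<Longrightarrow> I \<subseteq> A \<Longrightarrow> J \<subseteq> A \<Longrightarrow> I \<inter> J \<noteq> {} \<Longrightarrow>
      tr I A ` dom I A \<inter> tr J A ` dom J A \<subseteq> tr (I \<inter> J) A ` dom (I \<inter> J) A"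
begin

definition glue_base :: "'i set \<times> 'a \<Rightarrow> 'i set \<times> 'a \<Rightarrow> bool" where
  "glue_base a b \<longleftrightarrow> (\<exists>I J x. I \<in> idx \<and> J \<in> idx \<and> I \<subseteq> J \<and> x \<in> dom I J \<and>
                         a = (I, x) \<and> b = (J, tr I J x))"

definition glue_rel :: "(('i set \<times> 'a) \<times> ('i set \<times> 'a)) set" where
  "glue_rel = {(a, b). a \<in> Sigma idx space \<and> b \<in> Sigma idx space \<and> equivclp glue_base a b}"

definition glued :: "'i set \<Rightarrow> 'a \<Rightarrow> 'i set \<Rightarrow> 'a \<Rightarrow> bool" where
  "glued I x J y \<longleftrightarrow> I \<union> J \<in> idx \<and> x \<in> dom I (I \<union> J) \<and> y \<in> dom J (I \<union> J) \<and>
                      tr I (I \<union> J) x = tr J (I \<union> J) y"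

lemma dom_mono: "I \<in> idx \<Longrightarrow> J \<in> idx \<Longrightarrow> I \<subseteq> J \<Longrightarrow> J \<subseteq> L \<Longrightarrow> x \<in> dom I L \<Longrightarrow> x \<in> dom I J"
  using dom_Int[of I J L] dom_idx[of x I L] by (auto simp: Un_absorb1)

lemma glued_refl: "x \<in> space I \<Longrightarrow> I \<in> idx \<Longrightarrow> glued I x I x"
  by (simp add: glued_def dom_refl)

lemma glued_sym: "glued I x J y \<Longrightarrow> glued J y I x"
  by (auto simp: glued_def Un_commute)

lemma glue_base_imp_glued:
  "glue_base a b \<Longrightarrow> fst a \<in> idx \<and> fst b \<in> idx \<and> glued (fst a) (snd a) (fst b) (snd b)"
  by (auto simp: glue_base_def glued_def Un_absorb1 dom_refl tr_refl tr_space)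

lemma glued_lift:
  assumes I: "I \<in> idx" and J: "J \<in> idx" and g: "glued I x J y"
    and M: "I \<union> J \<subseteq> M" and y: "y \<in> dom J M"
  shows "x \<in> dom I M \<and> tr I M x = tr J M y"
proof -
  define A where "A = I \<union> J"
  have A: "A \<in> idx" "x \<in> dom I A" "y \<in> dom J A" "tr I A x = tr J A y"
    using g by (auto simp: glued_def A_def)
  have "tr J A y \<in> dom A M" using tr_dom[OF J A(1) _ _ y] M by (auto simp: A_def)
  with tr_cocycle[OF J A(1) _ _ A(3)] tr_cocycle[OF I A(1) _ _ A(2)] A(4) M
  show ?thesis by (auto simp: A_def)
qed

lemma glued_descend:
  assumes I: "I \<in> idx" and J: "J \<in> idx" and M: "I \<union> J \<subseteq> M"
    and x: "x \<in> dom I M" and y: "y \<in> dom J M" and eq: "tr I M x = tr J M y"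
  shows "glued I x J y"
proof -
  define C where "C = I \<union> J"
  have CM: "C \<subseteq> M" and IC: "I \<subseteq> C" and JC: "J \<subseteq> C" using M by (auto simp: C_def)
  have M_idx: "M \<in> idx" using dom_idx x .
  have C: "C \<in> idx" using idx_subset[OF M_idx CM] idx_ne[OF I] IC by blast
  have xC: "x \<in> dom I C" and yC: "y \<in> dom J C"
    using dom_mono[OF I C IC CM x] dom_mono[OF J C JC CM y] .
  have xCM: "tr I C x \<in> dom C M" and yCM: "tr J C y \<in> dom C M"
    using tr_dom[OF I C IC CM x] tr_dom[OF J C JC CM y] .
  have "tr C M (tr I C x) = tr C M (tr J C y)"
    using tr_cocycle[OF I C IC CM xC xCM] tr_cocycle[OF J C JC CM yC yCM] eq by simp
  then have "tr I C x = tr J C y"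
    using inj_on_tr[OF C M_idx CM] xCM yCM by (auto dest: inj_onD)
  with C xC yC show ?thesis by (simp add: glued_def C_def)
qed

lemma glued_trans:
  assumes I: "I \<in> idx" and J: "J \<in> idx" and L: "L \<in> idx"
    and gIJ: "glued I x J y" and gJL: "glued J y L z"
  shows "glued I x L z"
proof -
  define M where "M = I \<union> J \<union> L"
  have "y \<in> dom J (I \<union> J)" "y \<in> dom J (J \<union> L)" "I \<union> J \<in> idx" "J \<union> L \<in> idx"
    using gIJ gJL by (auto simp: glued_def)
  moreover have "(I \<union> J) \<union> (J \<union> L) = M" by (auto simp: M_def)
  ultimately have yM: "y \<in> dom J M"
    using dom_Int[OF J, of "I \<union> J" "J \<union> L"] by auto
  have "x \<in> dom I M" "tr I M x = tr J M y"
    using glued_lift[OF I J gIJ _ yM] by (auto simp: M_def)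
  moreover have "z \<in> dom L M" "tr L M z = tr J M y"
    using glued_lift[OF L J glued_sym[OF gJL] _ yM] by (auto simp: M_def)
  moreover have "I \<union> L \<subseteq> M" by (auto simp: M_def)
  ultimately show ?thesis using glued_descend[OF I L] by metis
qed

lemma glue_rel_iff_glued:
  assumes I: "I \<in> idx" and J: "J \<in> idx" and x: "x \<in> space I" and y: "y \<in> space J"
  shows "((I, x), (J, y)) \<in> glue_rel \<longleftrightarrow> glued I x J y"
proof
  assume "glued I x J y"
  then have "glue_base (I, x) (I \<union> J, tr I (I \<union> J) x)" "glue_base (J, y) (I \<union> J, tr I (I \<union> J) x)"
    using I J by (auto simp: glued_def glue_base_def)
  then have "equivclp glue_base (I, x) (J, y)"
    by (meson equivclp_sym r_into_equivclp transpD transp_equivclp)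
  with I J x y show "((I, x), (J, y)) \<in> glue_rel" by (simp add: glue_rel_def)
next
  assume "((I, x), (J, y)) \<in> glue_rel"
  then have "equivclp glue_base (I, x) (J, y)" by (simp add: glue_rel_def)
  have "fst b \<in> idx \<and> glued I x (fst b) (snd b)" if "equivclp glue_base (I, x) b" for b
    using that
  proof (induction rule: equivclp_induct)
    case base
    show ?case using I x by (simp add: glued_refl)
  next
    case (step b c)
    then have "fst c \<in> idx \<and> glued (fst b) (snd b) (fst c) (snd c)"
      using glue_base_imp_glued glued_sym by blast
    with step.IH show ?case using glued_trans[OF I] by blast
  qed
  from this[OF \<open>equivclp glue_base (I, x) (J, y)\<close>] show "glued I x J y" by simp
qed

lemma glued_iff_common_source:
  assumes I: "I \<in> idx" and J: "J \<in> idx" and IJ: "I \<inter> J \<noteq> {}"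
  shows "glued I x J y \<longleftrightarrow> (\<exists>w \<in> dom (I \<inter> J) I \<inter> dom (I \<inter> J) J.
                               tr (I \<inter> J) I w = x \<and> tr (I \<inter> J) J w = y)"
proof -
  define H where "H = I \<inter> J"
  define A where "A = I \<union> J"
  have H: "H \<in> idx" using idx_subset[OF I] IJ by (auto simp: H_def)
  have HI: "H \<subseteq> I" and HJ: "H \<subseteq> J" and IA: "I \<subseteq> A" and JA: "J \<subseteq> A"
    by (auto simp: H_def A_def)
  have dom_HA: "dom H I \<inter> dom H J = dom H A"
    using dom_Int[OF H I J HI HJ] by (simp add: A_def)
  have push: "tr H K w \<in> dom K A \<and> tr K A (tr H K w) = tr H A w"
    if w: "w \<in> dom H A" and K: "K \<in> idx" "H \<subseteq> K" "K \<subseteq> A" for w K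
  proof -
    have "tr H K w \<in> dom K A" using tr_dom[OF H K w] .
    with tr_cocycle[OF H K dom_mono[OF H K w]] K show ?thesis by blast
  qed
  show ?thesis unfolding H_def[symmetric]
  proof
    assume "glued I x J y"
    then have A: "A \<in> idx" "x \<in> dom I A" "y \<in> dom J A" and eq: "tr I A x = tr J A y"
      by (simp_all add: glued_def A_def)
    have "tr I A x \<in> tr I A ` dom I A \<inter> tr J A ` dom J A"
      using A eq by (metis IntI image_eqI)
    then have "tr I A x \<in> tr H A ` dom H A"
      using tr_image_Int[OF I J A(1) IA JA IJ] by (auto simp: H_def)
    then obtain w where w: "w \<in> dom H A" and v: "tr H A w = tr I A x" by (metis imageE)
    have "tr H I w = x"
      using push[OF w I HI IA] inj_on_tr[OF I A(1) IA] A(2) v by (auto dest: inj_onD)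
    moreover have "tr H J w = y"
      using push[OF w J HJ JA] inj_on_tr[OF J A(1) JA] A(3) v eq by (auto dest: inj_onD)
    ultimately show "\<exists>w \<in> dom H I \<inter> dom H J. tr H I w = x \<and> tr H J w = y"
      using w dom_HA by blast
  next
    assume "\<exists>w \<in> dom H I \<inter> dom H J. tr H I w = x \<and> tr H J w = y"
    then obtain w where w: "w \<in> dom H A" and x: "tr H I w = x" and y: "tr H J w = y"
      using dom_HA by blast
    have "A \<in> idx" using dom_idx w .
    with push[OF w I HI IA] push[OF w J HJ JA] show "glued I x J y"
      by (simp add: glued_def A_def x y)
  qed
qed

lemma inj_on_glue_class:
  assumes "I \<in> idx"
  shows "inj_on (\<lambda>x. glue_rel `` {(I, x)}) (space I)"
proof (rule inj_onI)
  fix x x' assume x: "x \<in> space I" and x': "x' \<in> space I"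
    and eq: "glue_rel `` {(I, x)} = glue_rel `` {(I, x')}"
  have "((I, x'), (I, x')) \<in> glue_rel" using assms x' by (simp add: glue_rel_def)
  then have "((I, x), (I, x')) \<in> glue_rel" using eq by blast
  then show "x = x'" using glue_rel_iff_glued[OF assms assms x x'] by (simp add: glued_def tr_refl)
qed

end

section \<open>Charts, coordinate changes and filtration of a tame atlas\<close>

lemma is_kchartD:
  assumes "is_kchart X U E p z s ps F"
  shows "continuous_map E U p" "continuous_map U E z" "continuous_map U E s"
    "x \<in> topspace U \<Longrightarrow> p (z x) = x" "x \<in> topspace U \<Longrightarrow> p (s x) = x"
    "homeomorphic_map (subtopology U (zeroset U z s)) (subtopology X F) ps"
  using assms by (simp_all add: is_kchart_def)

locale tame_katlas =
  fixes X :: "'x topology" and K :: "('x, 'u, 'e) katlas"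
  assumes atlas: "is_top_katlas X K" and filtered: "is_filtered K" and tame: "is_tame K"
begin

lemma
  shows kcharts: "\<forall>J\<in>IK K. is_kchart X (Ut K J) (Et K J) (pr K J) (zr K J) (sc K J) (psi K J)
                                    (footprint K J)"
    and coord_changes: "\<forall>I\<in>IK K. \<forall>J\<in>IK K. I \<subset> J \<longrightarrow> is_coord_change X K I J"
    and cocycles: "\<forall>I\<in>IK K. \<forall>J\<in>IK K. \<forall>L\<in>IK K. I \<subset> J \<and> J \<subset> L \<longrightarrow>
        (\<forall>e\<in>prpre K I ((UU K I J \<inter> phi K I J -` UU K J L) \<inter> UU K I L).
            Phi K J L (Phi K I J e) = Phi K I L e) \<and>
        UU K I J \<inter> phi K I J -` UU K J L \<subseteq> UU K I L"
  by (insert atlas, unfold is_top_katlas_def, (elim conjE, assumption)+)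

lemma kchart:
  "I \<in> IK K \<Longrightarrow> is_kchart X (Ut K I) (Et K I) (pr K I) (zr K I) (sc K I) (psi K I) (footprint K I)"
  using kcharts by blast

lemma coord_change: "I \<in> IK K \<Longrightarrow> J \<in> IK K \<Longrightarrow> I \<subset> J \<Longrightarrow> is_coord_change X K I J"
  using coord_changes by blast

lemma pr_zr: "I \<in> IK K \<Longrightarrow> x \<in> topspace (Ut K I) \<Longrightarrow> pr K I (zr K I x) = x"
  by (rule is_kchartD(4)[OF kchart])

lemma pr_sc: "I \<in> IK K \<Longrightarrow> x \<in> topspace (Ut K I) \<Longrightarrow> pr K I (sc K I x) = x"
  by (rule is_kchartD(5)[OF kchart])

lemma zr_in_topspace: "I \<in> IK K \<Longrightarrow> x \<in> topspace (Ut K I) \<Longrightarrow> zr K I x \<in> topspace (Et K I)"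
  using is_kchartD(2)[OF kchart] continuous_map_image_subset_topspace by blast

lemma sc_in_topspace: "I \<in> IK K \<Longrightarrow> x \<in> topspace (Ut K I) \<Longrightarrow> sc K I x \<in> topspace (Et K I)"
  using is_kchartD(3)[OF kchart] continuous_map_image_subset_topspace by blast

lemma pr_in_topspace: "I \<in> IK K \<Longrightarrow> e \<in> topspace (Et K I) \<Longrightarrow> pr K I e \<in> topspace (Ut K I)"
  using is_kchartD(1)[OF kchart] continuous_map_image_subset_topspace by blast

lemma psi_image: "I \<in> IK K \<Longrightarrow> psi K I ` chart_zeros K I = topspace X \<inter> footprint K I"
  using homeomorphic_imp_surjective_map[OF is_kchartD(6)[OF kchart]]
  by (simp add: chart_zeros_def zeroset_def inf.absorb2)

lemma
  assumes "I \<in> IK K" "J \<in> IK K" "I \<subset> J"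
  shows UU_open: "openin (Ut K I) (UU K I J)"
    and UU_Int_chart_zeros: "UU K I J \<inter> chart_zeros K I =
          {x \<in> chart_zeros K I. psi K I x \<in> footprint K I \<inter> footprint K J}"
    and Phi_embedding: "embedding_map (subtopology (Et K I) (prpre K I (UU K I J))) (Et K J) (Phi K I J)"
    and phi_embedding: "embedding_map (subtopology (Ut K I) (UU K I J)) (Ut K J) (phi K I J)"
    and pr_Phi: "\<forall>e\<in>prpre K I (UU K I J). pr K J (Phi K I J e) = phi K I J (pr K I e)"
    and Phi_zr: "\<forall>x\<in>UU K I J. zr K J (phi K I J x) = Phi K I J (zr K I x)"
    and Phi_sc: "\<forall>x\<in>UU K I J. sc K J (phi K I J x) = Phi K I J (sc K I x)"
    and phi_chart_zeros: "\<forall>x\<in>UU K I J \<inter> chart_zeros K I.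
          phi K I J x = inv_into (chart_zeros K J) (psi K J) (psi K I x)"
  by (insert coord_change[OF assms], unfold is_coord_change_def, (elim conjE, assumption)+)

lemma
  shows filtration_ends: "\<forall>J\<in>IK K. EE K J J = topspace (Et K J) \<and> EE K {} J = zr K J ` topspace (Ut K J)"
    and filtration_Phi: "\<forall>J\<in>IK K. \<forall>L\<in>IK K. \<forall>I. I \<subseteq> J \<and> J \<subset> L \<longrightarrow>
        Phi K J L ` (prpre K J (UU K J L) \<inter> EE K I J) = EE K I L \<inter> prpre K L (phi K J L ` UU K J L)"
    and filtration_Int: "\<forall>J\<in>IK K. \<forall>I H. I \<subseteq> J \<and> H \<subseteq> J \<longrightarrow> EE K I J \<inter> EE K H J = EE K (I \<inter> H) J"
  by (insert filtered, unfold is_filtered_def, (elim conjE, assumption)+)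

lemma
  shows tame_Uij_Int: "\<forall>I\<in>IK K. \<forall>J\<in>IK K. \<forall>L\<in>IK K. I \<subseteq> J \<and> I \<subseteq> L \<longrightarrow>
        Uij K I J \<inter> Uij K I L = Uij K I (J \<union> L)"
    and tame_phij_image: "\<forall>I\<in>IK K. \<forall>J\<in>IK K. \<forall>L\<in>IK K. I \<subseteq> J \<and> J \<subseteq> L \<longrightarrow>
        phij K I J ` Uij K I L = Uij K J L \<inter> {x \<in> topspace (Ut K J). sc K J x \<in> EE K I J}"
  by (insert tame, unfold is_tame_def, (elim conjE, assumption)+)

lemma EE_top: "J \<in> IK K \<Longrightarrow> EE K J J = topspace (Et K J)"
  using filtration_ends by blast

lemma EE_empty: "J \<in> IK K \<Longrightarrow> EE K {} J = zr K J ` topspace (Ut K J)"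
  using filtration_ends by blast

lemma EE_Int: "J \<in> IK K \<Longrightarrow> I \<subseteq> J \<Longrightarrow> H \<subseteq> J \<Longrightarrow> EE K I J \<inter> EE K H J = EE K (I \<inter> H) J"
  using filtration_Int by blast

lemma Uij_Int:
  "I \<in> IK K \<Longrightarrow> J \<in> IK K \<Longrightarrow> L \<in> IK K \<Longrightarrow> I \<subseteq> J \<Longrightarrow> I \<subseteq> L \<Longrightarrow>
   Uij K I J \<inter> Uij K I L = Uij K I (J \<union> L)"
  using tame_Uij_Int by blast

lemma phij_image_Uij:
  "I \<in> IK K \<Longrightarrow> J \<in> IK K \<Longrightarrow> L \<in> IK K \<Longrightarrow> I \<subseteq> J \<Longrightarrow> J \<subseteq> L \<Longrightarrow>
   phij K I J ` Uij K I L = Uij K J L \<inter> {x \<in> topspace (Ut K J). sc K J x \<in> EE K I J}"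
  using tame_phij_image by blast

lemma IK_ne: "I \<in> IK K \<Longrightarrow> I \<noteq> {}"
  by (simp add: IK_def)

lemma IK_subset: "J \<in> IK K \<Longrightarrow> I \<subseteq> J \<Longrightarrow> I \<noteq> {} \<Longrightarrow> I \<in> IK K"
  unfolding IK_def footprint_def by blast

lemma Uij_IK: "x \<in> Uij K I J \<Longrightarrow> J \<in> IK K"
  by (simp add: Uij_def split: if_splits)

lemma Uij_refl: "J \<in> IK K \<Longrightarrow> Uij K J J = topspace (Ut K J)"
  by (simp add: Uij_def)

lemma Uij_strict: "J \<in> IK K \<Longrightarrow> I \<noteq> J \<Longrightarrow> Uij K I J = UU K I J"
  by (simp add: Uij_def)

lemma UU_subset_topspace: "I \<in> IK K \<Longrightarrow> J \<in> IK K \<Longrightarrow> I \<subset> J \<Longrightarrow> UU K I J \<subseteq> topspace (Ut K I)"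
  by (rule openin_subset[OF UU_open])

lemma Uij_subset_topspace: "I \<in> IK K \<Longrightarrow> I \<subseteq> J \<Longrightarrow> Uij K I J \<subseteq> topspace (Ut K I)"
  using UU_subset_topspace[of I J] by (auto simp: Uij_def psubset_eq)

lemma phij_in_topspace:
  assumes "I \<in> IK K" "I \<subseteq> J" "x \<in> Uij K I J"
  shows "phij K I J x \<in> topspace (Ut K J)"
proof (cases "I = J")
  case False
  have J: "J \<in> IK K" using Uij_IK assms(3) .
  with assms have "x \<in> topspace (subtopology (Ut K I) (UU K I J))"
    using Uij_subset_topspace[OF assms(1,2)] False by (auto simp: Uij_strict)
  with embedding_map_image_subset_topspace[OF phi_embedding[OF assms(1) J]] assms False
  show ?thesis by (auto simp: phij_def)
qed (use assms in \<open>simp add: phij_def Uij_def\<close>)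

lemma topspace_subtopology_UU:
  "I \<in> IK K \<Longrightarrow> J \<in> IK K \<Longrightarrow> I \<subset> J \<Longrightarrow> topspace (subtopology (Ut K I) (UU K I J)) = UU K I J"
  using UU_subset_topspace by (simp add: inf.absorb2)

lemma topspace_subtopology_prpre: "topspace (subtopology (Et K I) (prpre K I A)) = prpre K I A"
  by (auto simp: prpre_def)

lemma inj_on_phij:
  assumes "I \<in> IK K" "J \<in> IK K" "I \<subseteq> J"
  shows "inj_on (phij K I J) (Uij K I J)"
proof (cases "I = J")
  case False
  then have IJ: "I \<subset> J" using assms by blast
  show ?thesis
    using embedding_map_imp_inj_on[OF phi_embedding[OF assms(1,2) IJ]] False assms(2)
    unfolding topspace_subtopology_UU[OF assms(1,2) IJ] by (simp add: phij_def Uij_strict)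
qed (simp add: phij_def)

lemma inj_on_Phij:
  assumes "I \<in> IK K" "J \<in> IK K" "I \<subseteq> J"
  shows "inj_on (Phij K I J) (prpre K I (Uij K I J))"
proof (cases "I = J")
  case False
  then have IJ: "I \<subset> J" using assms by blast
  show ?thesis
    using embedding_map_imp_inj_on[OF Phi_embedding[OF assms(1,2) IJ]] False assms(2)
    unfolding topspace_subtopology_prpre by (simp add: Phij_def Uij_strict)
qed (simp add: Phij_def)

lemma Phij_in_prpre:
  assumes "I \<in> IK K" "I \<subseteq> J" "e \<in> prpre K I (Uij K I J)"
  shows "Phij K I J e \<in> topspace (Et K J)" and "pr K J (Phij K I J e) = phij K I J (pr K I e)"
proof -
  have J: "J \<in> IK K" using assms(3) Uij_IK by (auto simp: prpre_def)
  show "Phij K I J e \<in> topspace (Et K J)"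
    using embedding_map_image_subset_topspace[OF Phi_embedding[OF assms(1) J]] assms J
    by (cases "I = J") (auto simp: Phij_def Uij_strict topspace_subtopology_prpre psubset_eq prpre_def)
  show "pr K J (Phij K I J e) = phij K I J (pr K I e)"
    using pr_Phi[OF assms(1) J] assms J
    by (cases "I = J") (auto simp: Phij_def phij_def Uij_strict psubset_eq)
qed

lemma Phij_zr:
  "I \<in> IK K \<Longrightarrow> I \<subseteq> J \<Longrightarrow> x \<in> Uij K I J \<Longrightarrow> Phij K I J (zr K I x) = zr K J (phij K I J x)"
  using Phi_zr[of I J] Uij_IK[of x I J]
  by (cases "I = J") (auto simp: Phij_def phij_def Uij_strict psubset_eq)

lemma Phij_sc:
  "I \<in> IK K \<Longrightarrow> I \<subseteq> J \<Longrightarrow> x \<in> Uij K I J \<Longrightarrow> Phij K I J (sc K I x) = sc K J (phij K I J x)"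
  using Phi_sc[of I J] Uij_IK[of x I J]
  by (cases "I = J") (auto simp: Phij_def phij_def Uij_strict psubset_eq)

lemma Phij_cocycle:
  assumes I: "I \<in> IK K" and J: "J \<in> IK K" and L: "L \<in> IK K" and "I \<subseteq> J" "J \<subseteq> L"
    and e: "e \<in> prpre K I (Uij K I J)" and e': "Phij K I J e \<in> prpre K J (Uij K J L)"
  shows "e \<in> prpre K I (Uij K I L) \<and> Phij K J L (Phij K I J e) = Phij K I L e"
proof (cases "I = J \<or> J = L")
  case True
  with e e' show ?thesis by (auto simp: Phij_def)
next
  case False
  then have IJ: "I \<subset> J" and JL: "J \<subset> L" and "I \<noteq> L" using assms(4,5) by auto
  have x: "pr K I e \<in> UU K I J" and eE: "e \<in> topspace (Et K I)"
    using e J False by (auto simp: prpre_def Uij_strict)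
  have "phi K I J (pr K I e) \<in> UU K J L"
    using e' L False pr_Phi[OF I J IJ] e J by (auto simp: prpre_def Uij_strict Phij_def)
  then have "pr K I e \<in> UU K I L" using cocycles I J L IJ JL x by blast
  moreover have "Phi K J L (Phi K I J e) = Phi K I L e"
    using cocycles I J L IJ JL x eE calculation \<open>phi K I J (pr K I e) \<in> UU K J L\<close>
    by (auto simp: prpre_def)
  ultimately show ?thesis
    using L False \<open>I \<noteq> L\<close> eE by (simp add: prpre_def Uij_strict Phij_def)
qed

text \<open>The cocycle condition on the base follows from the one on the bundles via the zero section.\<close>
lemma phij_cocycle:
  assumes I: "I \<in> IK K" and J: "J \<in> IK K" and L: "L \<in> IK K" and IJ: "I \<subseteq> J" and JL: "J \<subseteq> L"
    and x: "x \<in> Uij K I J" and x': "phij K I J x \<in> Uij K J L"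
  shows "x \<in> Uij K I L \<and> phij K J L (phij K I J x) = phij K I L x"
proof -
  have xI: "x \<in> topspace (Ut K I)" using Uij_subset_topspace[OF I IJ] x by blast
  define e where "e = zr K I x"
  have pr_e: "pr K I e = x" and e: "e \<in> prpre K I (Uij K I J)"
    using pr_zr[OF I xI] zr_in_topspace[OF I xI] x by (auto simp: e_def prpre_def)
  have e': "Phij K I J e \<in> prpre K J (Uij K J L)"
    using Phij_in_prpre[OF I IJ e] pr_e x' by (simp add: prpre_def)
  note cocycle = Phij_cocycle[OF I J L IJ JL e e']
  have "x \<in> Uij K I L" using cocycle pr_e by (auto simp: prpre_def)
  moreover have "phij K J L (phij K I J x) = pr K L (Phij K J L (Phij K I J e))"
    using Phij_in_prpre(2)[OF J JL e'] Phij_in_prpre(2)[OF I IJ e] pr_e by simp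
  moreover have "pr K L (Phij K I L e) = phij K I L x"
    using Phij_in_prpre(2)[OF I _ conjunct1[OF cocycle]] IJ JL pr_e by auto
  ultimately show ?thesis using cocycle by simp
qed

lemma phij_Uij:
  "I \<in> IK K \<Longrightarrow> J \<in> IK K \<Longrightarrow> I \<subseteq> J \<Longrightarrow> J \<subseteq> L \<Longrightarrow> x \<in> Uij K I L \<Longrightarrow> phij K I J x \<in> Uij K J L"
  using phij_image_Uij[of I J L] Uij_IK[of x I L] by blast

lemma phij_image:
  assumes "I \<in> IK K" "A \<in> IK K" "I \<subseteq> A"
  shows "phij K I A ` Uij K I A = {v \<in> topspace (Ut K A). sc K A v \<in> EE K I A}"
  using phij_image_Uij[OF assms(1,2,2,3) order_refl] by (auto simp: Uij_refl[OF assms(2)])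

lemma Phij_image:
  assumes I: "I \<in> IK K" and A: "A \<in> IK K" and IA: "I \<subseteq> A"
  shows "Phij K I A ` prpre K I (Uij K I A) = EE K I A \<inter> prpre K A (phij K I A ` Uij K I A)"
proof (cases "I = A")
  case True
  with A show ?thesis
    by (auto simp: Phij_def phij_def Uij_refl EE_top prpre_def pr_in_topspace)
next
  case False
  then have "I \<subset> A" using IA by blast
  then have "Phi K I A ` (prpre K I (UU K I A) \<inter> EE K I I) = EE K I A \<inter> prpre K A (phi K I A ` UU K I A)"
    using filtration_Phi I A by blast
  moreover have "prpre K I (UU K I A) \<inter> EE K I I = prpre K I (UU K I A)"
    using EE_top[OF I] by (auto simp: prpre_def)
  ultimately show ?thesis
    using A False by (simp add: Phij_def phij_def Uij_strict)
qed

lemma Phij_in_EE: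
  assumes "I \<in> IK K" "I \<subseteq> A" "e \<in> prpre K I (Uij K I A)"
  shows "Phij K I A e \<in> EE K I A"
proof -
  have "A \<in> IK K" using assms(3) Uij_IK by (auto simp: prpre_def)
  with Phij_image[OF assms(1) _ assms(2)] assms(3) show ?thesis by blast
qed

lemma phij_image_Int:
  assumes I: "I \<in> IK K" and J: "J \<in> IK K" and A: "A \<in> IK K" and IA: "I \<subseteq> A" and JA: "J \<subseteq> A"
    and IJ: "I \<inter> J \<noteq> {}"
  shows "phij K I A ` Uij K I A \<inter> phij K J A ` Uij K J A = phij K (I \<inter> J) A ` Uij K (I \<inter> J) A"
proof -
  have H: "I \<inter> J \<in> IK K" using IK_subset[OF I _ IJ] by blast
  have HA: "I \<inter> J \<subseteq> A" using IA by blast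
  show ?thesis
    unfolding phij_image[OF I A IA] phij_image[OF J A JA] phij_image[OF H A HA]
      EE_Int[OF A IA JA, symmetric] by blast
qed

lemma Phij_image_Int:
  assumes I: "I \<in> IK K" and J: "J \<in> IK K" and A: "A \<in> IK K" and IA: "I \<subseteq> A" and JA: "J \<subseteq> A"
    and IJ: "I \<inter> J \<noteq> {}"
  shows "Phij K I A ` prpre K I (Uij K I A) \<inter> Phij K J A ` prpre K J (Uij K J A)
       = Phij K (I \<inter> J) A ` prpre K (I \<inter> J) (Uij K (I \<inter> J) A)"
proof -
  have H: "I \<inter> J \<in> IK K" using IK_subset[OF I _ IJ] by blast
  have HA: "I \<inter> J \<subseteq> A" using IA by blast
  show ?thesis
    unfolding Phij_image[OF I A IA] Phij_image[OF J A JA] Phij_image[OF H A HA]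
      EE_Int[OF A IA JA, symmetric] phij_image_Int[OF assms, symmetric]
    by (auto simp: prpre_def)
qed

end

sublocale tame_katlas \<subseteq> base: tame_gluing "IK K" "\<lambda>I. topspace (Ut K I)" "Uij K" "phij K"
proof
  fix I J L x
  show "J \<in> IK K \<Longrightarrow> I \<subseteq> J \<Longrightarrow> I \<noteq> {} \<Longrightarrow> I \<in> IK K" by (rule IK_subset)
  show "I \<in> IK K \<Longrightarrow> I \<noteq> {}" by (rule IK_ne)
  show "x \<in> Uij K I J \<Longrightarrow> J \<in> IK K" by (rule Uij_IK)
  show "J \<in> IK K \<Longrightarrow> Uij K J J = topspace (Ut K J)" by (rule Uij_refl)
  show "phij K J J x = x" by (simp add: phij_def)
  show "I \<in> IK K \<Longrightarrow> I \<subseteq> J \<Longrightarrow> x \<in> Uij K I J \<Longrightarrow> phij K I J x \<in> topspace (Ut K J)"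
    by (rule phij_in_topspace)
  show "I \<in> IK K \<Longrightarrow> J \<in> IK K \<Longrightarrow> I \<subseteq> J \<Longrightarrow> inj_on (phij K I J) (Uij K I J)"
    by (rule inj_on_phij)
  show "I \<in> IK K \<Longrightarrow> J \<in> IK K \<Longrightarrow> I \<subseteq> J \<Longrightarrow> J \<subseteq> L \<Longrightarrow> x \<in> Uij K I J \<Longrightarrow>
      phij K I J x \<in> Uij K J L \<Longrightarrow> x \<in> Uij K I L \<and> phij K J L (phij K I J x) = phij K I L x"
    by (rule phij_cocycle) (auto dest: Uij_IK)
  show "I \<in> IK K \<Longrightarrow> J \<in> IK K \<Longrightarrow> L \<in> IK K \<Longrightarrow> I \<subseteq> J \<Longrightarrow> I \<subseteq> L \<Longrightarrow>
      Uij K I J \<inter> Uij K I L = Uij K I (J \<union> L)"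
    by (rule Uij_Int)
  show "I \<in> IK K \<Longrightarrow> J \<in> IK K \<Longrightarrow> I \<subseteq> J \<Longrightarrow> J \<subseteq> L \<Longrightarrow> x \<in> Uij K I L \<Longrightarrow>
      phij K I J x \<in> Uij K J L"
    by (rule phij_Uij)
next
  fix I J A
  show "I \<in> IK K \<Longrightarrow> J \<in> IK K \<Longrightarrow> A \<in> IK K \<Longrightarrow> I \<subseteq> A \<Longrightarrow> J \<subseteq> A \<Longrightarrow> I \<inter> J \<noteq> {} \<Longrightarrow>
      phij K I A ` Uij K I A \<inter> phij K J A ` Uij K J A \<subseteq> phij K (I \<inter> J) A ` Uij K (I \<inter> J) A"
    by (simp add: phij_image_Int)
qed

sublocale tame_katlas \<subseteq> obs_bundle:
  tame_gluing "IK K" "\<lambda>I. topspace (Et K I)" "\<lambda>I J. prpre K I (Uij K I J)" "Phij K"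
proof
  fix I J L e
  show "J \<in> IK K \<Longrightarrow> I \<subseteq> J \<Longrightarrow> I \<noteq> {} \<Longrightarrow> I \<in> IK K" by (rule IK_subset)
  show "I \<in> IK K \<Longrightarrow> I \<noteq> {}" by (rule IK_ne)
  show "e \<in> prpre K I (Uij K I J) \<Longrightarrow> J \<in> IK K" by (auto simp: prpre_def dest: Uij_IK)
  show "J \<in> IK K \<Longrightarrow> prpre K J (Uij K J J) = topspace (Et K J)"
    by (auto simp: prpre_def Uij_refl pr_in_topspace)
  show "Phij K J J e = e" by (simp add: Phij_def)
  show "I \<in> IK K \<Longrightarrow> I \<subseteq> J \<Longrightarrow> e \<in> prpre K I (Uij K I J) \<Longrightarrow> Phij K I J e \<in> topspace (Et K J)"
    by (rule Phij_in_prpre(1))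
  show "I \<in> IK K \<Longrightarrow> J \<in> IK K \<Longrightarrow> I \<subseteq> J \<Longrightarrow> inj_on (Phij K I J) (prpre K I (Uij K I J))"
    by (rule inj_on_Phij)
  show "I \<in> IK K \<Longrightarrow> J \<in> IK K \<Longrightarrow> I \<subseteq> J \<Longrightarrow> J \<subseteq> L \<Longrightarrow> e \<in> prpre K I (Uij K I J) \<Longrightarrow>
      Phij K I J e \<in> prpre K J (Uij K J L) \<Longrightarrow>
      e \<in> prpre K I (Uij K I L) \<and> Phij K J L (Phij K I J e) = Phij K I L e"
    by (rule Phij_cocycle) (auto simp: prpre_def dest: Uij_IK)
  show "I \<in> IK K \<Longrightarrow> J \<in> IK K \<Longrightarrow> L \<in> IK K \<Longrightarrow> I \<subseteq> J \<Longrightarrow> I \<subseteq> L \<Longrightarrow>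
      prpre K I (Uij K I J) \<inter> prpre K I (Uij K I L) = prpre K I (Uij K I (J \<union> L))"
    by (auto simp: prpre_def Uij_Int[symmetric])
  show "I \<in> IK K \<Longrightarrow> J \<in> IK K \<Longrightarrow> I \<subseteq> J \<Longrightarrow> J \<subseteq> L \<Longrightarrow> e \<in> prpre K I (Uij K I L) \<Longrightarrow>
      Phij K I J e \<in> prpre K J (Uij K J L)"
  proof -
    assume I: "I \<in> IK K" and J: "J \<in> IK K" and IJ: "I \<subseteq> J" and JL: "J \<subseteq> L"
      and e: "e \<in> prpre K I (Uij K I L)"
    then have "e \<in> prpre K I (Uij K I J)" using base.dom_mono by (auto simp: prpre_def)
    with Phij_in_prpre[OF I IJ] phij_Uij[OF I J IJ JL] e show ?thesis by (auto simp: prpre_def)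
  qed
next
  fix I J A
  show "I \<in> IK K \<Longrightarrow> J \<in> IK K \<Longrightarrow> A \<in> IK K \<Longrightarrow> I \<subseteq> A \<Longrightarrow> J \<subseteq> A \<Longrightarrow> I \<inter> J \<noteq> {} \<Longrightarrow>
      Phij K I A ` prpre K I (Uij K I A) \<inter> Phij K J A ` prpre K J (Uij K J A)
      \<subseteq> Phij K (I \<inter> J) A ` prpre K (I \<inter> J) (Uij K (I \<inter> J) A)"
    by (simp add: Phij_image_Int)
qed

context tame_katlas
begin

lemma zr_pr_eq_if_Phij_in_EE_empty:
  assumes I: "I \<in> IK K" and IA: "I \<subseteq> A" and e: "e \<in> prpre K I (Uij K I A)"
    and zero: "Phij K I A e \<in> EE K {} A"
  shows "e = zr K I (pr K I e)"
proof -
  define x where "x = pr K I e"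
  have A: "A \<in> IK K" and xA: "x \<in> Uij K I A" using e Uij_IK by (auto simp: prpre_def x_def)
  have xI: "x \<in> topspace (Ut K I)" using Uij_subset_topspace[OF I IA] xA by blast
  obtain u where u: "u \<in> topspace (Ut K A)" and Phij_e: "Phij K I A e = zr K A u"
    using zero EE_empty[OF A] by auto
  have "u = phij K I A x"
    using Phij_in_prpre(2)[OF I IA e] pr_zr[OF A u] Phij_e by (simp add: x_def)
  then have "Phij K I A e = Phij K I A (zr K I x)"
    using Phij_e Phij_zr[OF I IA xA] by simp
  moreover have "zr K I x \<in> prpre K I (Uij K I A)"
    using zr_in_topspace[OF I xI] pr_zr[OF I xI] xA by (simp add: prpre_def)
  ultimately show ?thesis
    using inj_on_Phij[OF I A IA] e by (auto simp: x_def dest: inj_onD)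
qed

lemma sc_eq_zr_if_sc_phij_in_EE_empty:
  assumes I: "I \<in> IK K" and IA: "I \<subseteq> A" and xA: "x \<in> Uij K I A"
    and zero: "sc K A (phij K I A x) \<in> EE K {} A"
  shows "sc K I x = zr K I x"
proof -
  have xI: "x \<in> topspace (Ut K I)" using Uij_subset_topspace[OF I IA] xA by blast
  have "sc K I x \<in> prpre K I (Uij K I A)"
    using sc_in_topspace[OF I xI] pr_sc[OF I xI] xA by (simp add: prpre_def)
  from zr_pr_eq_if_Phij_in_EE_empty[OF I IA this] zero Phij_sc[OF I IA xA] pr_sc[OF I xI]
  show ?thesis by simp
qed

lemma EE_Int_disjoint:
  "A \<in> IK K \<Longrightarrow> I \<subseteq> A \<Longrightarrow> J \<subseteq> A \<Longrightarrow> I \<inter> J = {} \<Longrightarrow> EE K I A \<inter> EE K J A = EE K {} A"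
  using EE_Int by simp

lemma footprint_Un: "footprint K (I \<union> J) = footprint K I \<inter> footprint K J"
  by (auto simp: footprint_def)

lemma psi_phij:
  assumes I: "I \<in> IK K" and A: "A \<in> IK K" and IA: "I \<subset> A" and xA: "x \<in> Uij K I A"
    and zero: "sc K I x = zr K I x"
  shows "psi K A (phij K I A x) = psi K I x"
proof -
  have xU: "x \<in> UU K I A" using xA A IA by (simp add: Uij_strict)
  have xz: "x \<in> chart_zeros K I"
    using UU_subset_topspace[OF I A IA] xU zero by (auto simp: chart_zeros_def zeroset_def)
  then have "psi K I x \<in> topspace X \<inter> footprint K A"
    using psi_image[OF I] UU_Int_chart_zeros[OF I A IA] xU by blast
  then have "psi K I x \<in> psi K A ` chart_zeros K A" using psi_image[OF A] by blast
  moreover have "phij K I A x = inv_into (chart_zeros K A) (psi K A) (psi K I x)"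
    using phi_chart_zeros[OF I A IA] xU xz IA by (auto simp: phij_def)
  ultimately show ?thesis by (simp add: f_inv_into_f)
qed

lemma base_glued_disjoint_iff:
  assumes I: "I \<in> IK K" and J: "J \<in> IK K" and disj: "I \<inter> J = {}"
    and x: "x \<in> topspace (Ut K I)" and y: "y \<in> topspace (Ut K J)"
  shows "base.glued I x J y \<longleftrightarrow> sc K I x = zr K I x \<and> sc K J y = zr K J y \<and> psi K I x = psi K J y"
proof -
  define A where "A = I \<union> J"
  have IA: "I \<subset> A" and JA: "J \<subset> A" using IK_ne[OF I] IK_ne[OF J] disj by (auto simp: A_def)
  show ?thesis
  proof
    assume "base.glued I x J y"
    then have A: "A \<in> IK K" and xA: "x \<in> Uij K I A" and yA: "y \<in> Uij K J A"
      and eq: "phij K I A x = phij K J A y"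
      by (simp_all add: base.glued_def A_def)
    have "sc K A (phij K I A x) \<in> EE K I A \<inter> EE K J A"
      using phij_image[OF I A] phij_image[OF J A] IA JA xA yA eq by blast
    then have zero: "sc K A (phij K I A x) \<in> EE K {} A"
      using EE_Int_disjoint[OF A _ _ disj] IA JA by blast
    have zx: "sc K I x = zr K I x"
      using sc_eq_zr_if_sc_phij_in_EE_empty[OF I _ xA zero] IA by blast
    moreover have zy: "sc K J y = zr K J y"
      using sc_eq_zr_if_sc_phij_in_EE_empty[OF J _ yA] zero eq JA by auto
    moreover have "psi K I x = psi K J y"
      using psi_phij[OF I A IA xA zx] psi_phij[OF J A JA yA zy] eq by simp
    ultimately show "sc K I x = zr K I x \<and> sc K J y = zr K J y \<and> psi K I x = psi K J y" by blast
  next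
    assume zeros: "sc K I x = zr K I x \<and> sc K J y = zr K J y \<and> psi K I x = psi K J y"
    then have xz: "x \<in> chart_zeros K I" and yz: "y \<in> chart_zeros K J"
      using x y by (auto simp: chart_zeros_def zeroset_def)
    have fI: "psi K I x \<in> topspace X \<inter> footprint K I" and fJ: "psi K J y \<in> footprint K J"
      using psi_image[OF I] psi_image[OF J] xz yz by blast+
    have fA: "psi K I x \<in> footprint K A"
      using fI fJ zeros by (simp add: A_def footprint_Un)
    then have A: "A \<in> IK K" using I J fI by (auto simp: IK_def A_def)
    have "x \<in> UU K I A \<inter> chart_zeros K I"
      using UU_Int_chart_zeros[OF I A IA] xz fI fA by blast
    moreover have "y \<in> UU K J A \<inter> chart_zeros K J"
      using UU_Int_chart_zeros[OF J A JA] yz fJ fA zeros by simp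
    ultimately have xA: "x \<in> UU K I A" and yA: "y \<in> UU K J A" by blast+
    have "phij K I A x = phij K J A y"
      using phi_chart_zeros[OF I A IA] phi_chart_zeros[OF J A JA] xA yA xz yz zeros IA JA
      by (auto simp: phij_def)
    with A xA yA IA JA show "base.glued I x J y"
      by (simp add: base.glued_def A_def[symmetric] Uij_strict)
  qed
qed

lemma base_glued_pr:
  assumes I: "I \<in> IK K" and J: "J \<in> IK K" and g: "obs_bundle.glued I e J f"
  shows "base.glued I (pr K I e) J (pr K J f)"
proof -
  define A where "A = I \<union> J"
  have A: "A \<in> IK K" and e: "e \<in> prpre K I (Uij K I A)" and f: "f \<in> prpre K J (Uij K J A)"
    and eq: "Phij K I A e = Phij K J A f"
    using g by (simp_all add: obs_bundle.glued_def A_def)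
  have "phij K I A (pr K I e) = phij K J A (pr K J f)"
    using Phij_in_prpre(2)[OF I _ e] Phij_in_prpre(2)[OF J _ f] eq by (simp add: A_def)
  with A e f show ?thesis by (simp add: base.glued_def prpre_def A_def[symmetric])
qed

lemma obs_bundle_glued_zr:
  assumes I: "I \<in> IK K" and J: "J \<in> IK K" and x: "x \<in> topspace (Ut K I)" and y: "y \<in> topspace (Ut K J)"
    and g: "base.glued I x J y"
  shows "obs_bundle.glued I (zr K I x) J (zr K J y)"
proof -
  define A where "A = I \<union> J"
  have A: "A \<in> IK K" and xA: "x \<in> Uij K I A" and yA: "y \<in> Uij K J A"
    and eq: "phij K I A x = phij K J A y"
    using g by (simp_all add: base.glued_def A_def)
  have "zr K I x \<in> prpre K I (Uij K I A)" and "zr K J y \<in> prpre K J (Uij K J A)"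
    using zr_in_topspace[OF I x] zr_in_topspace[OF J y] pr_zr[OF I x] pr_zr[OF J y] xA yA
    by (simp_all add: prpre_def)
  moreover have "Phij K I A (zr K I x) = Phij K J A (zr K J y)"
    using Phij_zr[OF I _ xA] Phij_zr[OF J _ yA] eq by (simp add: A_def)
  ultimately show ?thesis using A by (simp add: obs_bundle.glued_def A_def[symmetric])
qed

lemma obs_bundle_glued_disjoint_iff:
  assumes I: "I \<in> IK K" and J: "J \<in> IK K" and disj: "I \<inter> J = {}"
    and e: "e \<in> topspace (Et K I)" and f: "f \<in> topspace (Et K J)"
  shows "obs_bundle.glued I e J f \<longleftrightarrow>
    (\<exists>x\<in>topspace (Ut K I). \<exists>y\<in>topspace (Ut K J).
       e = sc K I x \<and> sc K I x = zr K I x \<and> f = sc K J y \<and> sc K J y = zr K J y \<and>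
       psi K I x = psi K J y)"
proof
  assume g: "obs_bundle.glued I e J f"
  define A where "A = I \<union> J"
  have A: "A \<in> IK K" and eA: "e \<in> prpre K I (Uij K I A)" and fA: "f \<in> prpre K J (Uij K J A)"
    and eq: "Phij K I A e = Phij K J A f"
    using g by (simp_all add: obs_bundle.glued_def A_def)
  have "Phij K I A e \<in> EE K I A \<inter> EE K J A"
    using Phij_in_EE[OF I _ eA] Phij_in_EE[OF J _ fA] eq by (simp add: A_def)
  moreover have "EE K I A \<inter> EE K J A = EE K {} A"
    using EE_Int_disjoint[OF A _ _ disj] by (simp add: A_def)
  ultimately have zero: "Phij K I A e \<in> EE K {} A" by blast
  have "e = zr K I (pr K I e)"
    using zr_pr_eq_if_Phij_in_EE_empty[OF I _ eA zero] by (simp add: A_def)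
  moreover have "f = zr K J (pr K J f)"
    using zr_pr_eq_if_Phij_in_EE_empty[OF J _ fA] zero eq by (simp add: A_def)
  moreover have "sc K I (pr K I e) = zr K I (pr K I e) \<and> sc K J (pr K J f) = zr K J (pr K J f) \<and>
      psi K I (pr K I e) = psi K J (pr K J f)"
    using base_glued_disjoint_iff[OF I J disj pr_in_topspace[OF I e] pr_in_topspace[OF J f]]
      base_glued_pr[OF I J g] by blast
  ultimately show "\<exists>x\<in>topspace (Ut K I). \<exists>y\<in>topspace (Ut K J).
       e = sc K I x \<and> sc K I x = zr K I x \<and> f = sc K J y \<and> sc K J y = zr K J y \<and>
       psi K I x = psi K J y"
    using pr_in_topspace[OF I e] pr_in_topspace[OF J f] by metis
next
  assume "\<exists>x\<in>topspace (Ut K I). \<exists>y\<in>topspace (Ut K J).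
       e = sc K I x \<and> sc K I x = zr K I x \<and> f = sc K J y \<and> sc K J y = zr K J y \<and>
       psi K I x = psi K J y"
  then obtain x y where x: "x \<in> topspace (Ut K I)" and y: "y \<in> topspace (Ut K J)"
    and zeros: "sc K I x = zr K I x" "sc K J y = zr K J y" "psi K I x = psi K J y"
    and "e = zr K I x" "f = zr K J y"
    by auto
  with obs_bundle_glued_zr[OF I J x y] base_glued_disjoint_iff[OF I J disj x y]
  show "obs_bundle.glued I e J f" by simp
qed

section \<open>The relations defining the virtual neighbourhood\<close>

lemma relU_eq: "relU K = base.glue_rel"
proof -
  have "baseU K = base.glue_base" by (intro ext) (simp add: baseU_def base.glue_base_def)
  then show ?thesis by (auto simp: relU_def base.glue_rel_def domU_def)
qed

lemma relE_eq: "relE K = obs_bundle.glue_rel"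
proof -
  have "baseE K = obs_bundle.glue_base" by (intro ext) (simp add: baseE_def obs_bundle.glue_base_def)
  then show ?thesis by (auto simp: relE_def obs_bundle.glue_rel_def domE_def)
qed

lemma relU_iff_glued_at_union:
  assumes "I \<in> IK K" "J \<in> IK K" "x \<in> topspace (Ut K I)" "y \<in> topspace (Ut K J)"
  shows "((I, x), (J, y)) \<in> relU K
    \<longleftrightarrow> I \<union> J \<in> IK K \<and> x \<in> Uij K I (I \<union> J) \<and> y \<in> Uij K J (I \<union> J) \<and>
        phij K I (I \<union> J) x = phij K J (I \<union> J) y"
  using base.glue_rel_iff_glued[OF assms] by (simp add: relU_eq base.glued_def)

lemma relU_iff_common_source_or_zeros:
  assumes "I \<in> IK K" "J \<in> IK K" "x \<in> topspace (Ut K I)" "y \<in> topspace (Ut K J)"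
  shows "((I, x), (J, y)) \<in> relU K
    \<longleftrightarrow> (I \<inter> J \<noteq> {} \<and> (\<exists>w \<in> Uij K (I \<inter> J) I \<inter> Uij K (I \<inter> J) J.
                          phij K (I \<inter> J) I w = x \<and> phij K (I \<inter> J) J w = y))
      \<or> (I \<inter> J = {} \<and> sc K I x = zr K I x \<and> sc K J y = zr K J y \<and> psi K I x = psi K J y)"
  using base.glue_rel_iff_glued[OF assms] base.glued_iff_common_source[OF assms(1,2)]
    base_glued_disjoint_iff[OF assms(1,2) _ assms(3,4)]
  by (cases "I \<inter> J = {}") (simp_all add: relU_eq)

lemma relE_iff_glued_at_union:
  assumes "I \<in> IK K" "J \<in> IK K" "e \<in> topspace (Et K I)" "f \<in> topspace (Et K J)"
  shows "((I, e), (J, f)) \<in> relE K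
    \<longleftrightarrow> I \<union> J \<in> IK K \<and> e \<in> prpre K I (Uij K I (I \<union> J)) \<and> f \<in> prpre K J (Uij K J (I \<union> J)) \<and>
        Phij K I (I \<union> J) e = Phij K J (I \<union> J) f"
  using obs_bundle.glue_rel_iff_glued[OF assms] by (simp add: relE_eq obs_bundle.glued_def)

lemma relE_iff_common_source_or_zeros:
  assumes "I \<in> IK K" "J \<in> IK K" "e \<in> topspace (Et K I)" "f \<in> topspace (Et K J)"
  shows "((I, e), (J, f)) \<in> relE K
    \<longleftrightarrow> (I \<inter> J \<noteq> {} \<and>
          (\<exists>w \<in> prpre K (I \<inter> J) (Uij K (I \<inter> J) I) \<inter> prpre K (I \<inter> J) (Uij K (I \<inter> J) J).
             Phij K (I \<inter> J) I w = e \<and> Phij K (I \<inter> J) J w = f))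
      \<or> (I \<inter> J = {} \<and>
          (\<exists>x\<in>topspace (Ut K I). \<exists>y\<in>topspace (Ut K J).
             e = sc K I x \<and> sc K I x = zr K I x \<and> f = sc K J y \<and> sc K J y = zr K J y \<and>
             psi K I x = psi K J y))"
  using obs_bundle.glue_rel_iff_glued[OF assms] obs_bundle.glued_iff_common_source[OF assms(1,2)]
    obs_bundle_glued_disjoint_iff[OF assms(1,2) _ assms(3,4)]
  by (cases "I \<inter> J = {}") (simp_all add: relE_eq)

lemma inj_on_piK: "I \<in> IK K \<Longrightarrow> inj_on (\<lambda>x. piK K (I, x)) (topspace (Ut K I))"
  unfolding piK_def relU_eq by (rule base.inj_on_glue_class)

lemma inj_on_piE: "I \<in> IK K \<Longrightarrow> inj_on (\<lambda>e. piE K (I, e)) (topspace (Et K I))"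
  unfolding piE_def relE_eq by (rule obs_bundle.inj_on_glue_class)

end

theorem mainTheorem6:
  fixes X :: "'x topology" and K :: "('x, 'u, 'e) katlas"
  assumes "compact_space X" and "metrizable_space X"
    and "is_top_katlas X K" and "is_filtered K" and "is_tame K"
  shows
   "(\<forall>I\<in>IK K. \<forall>J\<in>IK K. \<forall>x\<in>topspace (Ut K I). \<forall>y\<in>topspace (Ut K J).
      (((I, x), (J, y)) \<in> relU K
        \<longleftrightarrow> (I \<union> J \<in> IK K \<and> x \<in> Uij K I (I \<union> J) \<and> y \<in> Uij K J (I \<union> J) \<and>
             phij K I (I \<union> J) x = phij K J (I \<union> J) y))
    \<and> (((I, x), (J, y)) \<in> relU K
        \<longleftrightarrow> ((I \<inter> J \<noteq> {} \<and>
               (\<exists>w \<in> Uij K (I \<inter> J) I \<inter> Uij K (I \<inter> J) J.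
                  phij K (I \<inter> J) I w = x \<and> phij K (I \<inter> J) J w = y))
            \<or> (I \<inter> J = {} \<and> sc K I x = zr K I x \<and> sc K J y = zr K J y \<and>
               psi K I x = psi K J y))))
  \<and> (\<forall>I\<in>IK K. \<forall>J\<in>IK K. \<forall>e\<in>topspace (Et K I). \<forall>f\<in>topspace (Et K J).
      (((I, e), (J, f)) \<in> relE K
        \<longleftrightarrow> (I \<union> J \<in> IK K \<and> e \<in> prpre K I (Uij K I (I \<union> J)) \<and>
             f \<in> prpre K J (Uij K J (I \<union> J)) \<and>
             Phij K I (I \<union> J) e = Phij K J (I \<union> J) f))
    \<and> (((I, e), (J, f)) \<in> relE K
        \<longleftrightarrow> ((I \<inter> J \<noteq> {} \<and>
               (\<exists>w \<in> prpre K (I \<inter> J) (Uij K (I \<inter> J) I) \<inter> prpre K (I \<inter> J) (Uij K (I \<inter> J) J).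
                  Phij K (I \<inter> J) I w = e \<and> Phij K (I \<inter> J) J w = f))
            \<or> (I \<inter> J = {} \<and>
               (\<exists>x\<in>topspace (Ut K I). \<exists>y\<in>topspace (Ut K J).
                  e = sc K I x \<and> sc K I x = zr K I x \<and> f = sc K J y \<and> sc K J y = zr K J y \<and>
                  psi K I x = psi K J y)))))
  \<and> (\<forall>I\<in>IK K. inj_on (\<lambda>x. piK K (I, x)) (topspace (Ut K I))
              \<and> inj_on (\<lambda>e. piE K (I, e)) (topspace (Et K I)))"
proof -
  interpret tame_katlas X K using assms(3-5) by unfold_locales
  show ?thesis
    by (intro conjI ballI relU_iff_glued_at_union relU_iff_common_source_or_zeros
        relE_iff_glued_at_union relE_iff_common_source_or_zeros inj_on_piK inj_on_piE)
qed

end
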